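(* Let $\phi:\mathbb{R}\to\mathbb{R}$ be a differentiable elementwise nonlinearity with $\frac{\phi(z)}{\phi'(z)}<\infty$ for all $z\in\mathbb{R}$. Let $f(z)=W_1\phi(W_2 z)$ with $W_1\in\mathbb{R}^{k_0\times k}$, $W_2\in\mathbb{R}^{k\times k_0}$, and let $x\in\mathbb{R}^{k_0}$ with $\|x\|_2=1$. Initialize $W_1^{(0)}=x{u^{(0)}}^T$, $W_2^{(0)}=v^{(0)}x^T$ with $u^{(0)},v^{(0)}\in\mathbb{R}^k$ each having all entries equal, and train by gradient descent with learning rate $\gamma\to0$ on $\mathcal{L}(x,f)=\frac12\|x-f(x)\|_2^2$, yielding $W_1^{(\infty)}=xu^T$, $W_2^{(\infty)}=vx^T$ with $u_i=u_j$, $v_i=v_j$ for all $i,j$, $u_i\phi(v_i)=1/k$ and $\frac{u_i^2-{u_i^{(0)}}^2}{2}=\int_{v_i^{(0)}}^{v_i}\frac{\phi(z)}{\phi'(z)}dz$. Then for the trained network $f(z)=W_1^{(\infty)}\phi(W_2^{(\infty)}z)$, $$\lambda_1(\mathbf{J}(f(x)))=\frac{\phi'(v_i)v_i}{\phi(v_i)}$$ (for any $i\in[k]$).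
   Context: $\phi$ is applied coordinatewise. $\mathbf{J}(f(x))$ denotes the Jacobian matrix of $f$ evaluated at $x$, and $\lambda_1$ denotes its top eigenvalue (eigenvalue of largest absolute value). Gradient descent with learning rate $\gamma$ updates each weight matrix by $W\leftarrow W-\gamma\nabla_W\mathcal{L}$; the superscript $(\infty)$ denotes the weights at the end of training in the limit $\gamma\to0$ (gradient flow). *)

theory Defs
  imports "HOL-Analysis.Analysis"
begin

definition is_eigenvalue :: "real ^'n ^'n \<Rightarrow> complex \<Rightarrow> bool" where
  "is_eigenvalue A \<mu> \<longleftrightarrow>
     (\<exists>w :: complex ^'n. w \<noteq> 0 \<and>
        (\<chi> i. \<Sum>j\<in>UNIV. complex_of_real (A $ i $ j) * w $ j) = (\<chi> i. \<mu> * w $ i))"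

definition is_top_eigenvalue :: "real ^'n ^'n \<Rightarrow> complex \<Rightarrow> bool" where
  "is_top_eigenvalue A lam \<longleftrightarrow>
     is_eigenvalue A lam \<and> (\<forall>\<mu>. is_eigenvalue A \<mu> \<longrightarrow> cmod \<mu> \<le> cmod lam)"

definition net :: "(real \<Rightarrow> real) \<Rightarrow> real ^'k ^'k0 \<Rightarrow> real ^'k0 ^'k \<Rightarrow> real ^'k0 \<Rightarrow> real ^'k0" where
  "net \<phi> W1 W2 z = W1 *v (\<chi> i. \<phi> ((W2 *v z) $ i))"

end

theory Submission
  imports Defs
begin

text \<open>With rank-one weights \<open>W\<^sub>1 = x u\<^sup>T\<close> and \<open>W\<^sub>2 = v x\<^sup>T\<close> the network is
  \<open>f z = g (x \<bullet> z) x\<close> with the scalar profile \<open>g t = \<Sum>\<^sub>j u\<^sub>j \<phi> (v\<^sub>j t)\<close>. Its Jacobian at a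
  unit vector \<open>x\<close> is the rank-one matrix \<open>g'(1) x x\<^sup>T\<close>, whose only nonzero eigenvalue is
  \<open>g'(1) = \<Sum>\<^sub>j u\<^sub>j v\<^sub>j \<phi>'(v\<^sub>j)\<close>. For constant \<open>u\<close>, \<open>v\<close> the balance equation
  \<open>u\<^sub>i \<phi>(v\<^sub>i) = 1/k\<close> turns this sum into \<open>\<phi>'(v\<^sub>i) v\<^sub>i / \<phi>(v\<^sub>i)\<close>.\<close>

lemma is_top_eigenvalue_scaled_outer_unit:
  fixes x :: "real ^'n" and D :: real
  assumes "norm x = 1"
  shows "is_top_eigenvalue (\<chi> a b. D * x $ a * x $ b) (complex_of_real D)"
proof -
  let ?A = "\<chi> a b. D * x $ a * x $ b :: real ^'n ^'n"
  let ?xc = "\<chi> a. complex_of_real (x $ a)"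
  have x_unit_sum: "(\<Sum>b\<in>UNIV. x $ b * x $ b) = 1"
    using assms by (simp add: norm_eq_sqrt_inner inner_vec_def)
  have xc_unit: "(\<Sum>b\<in>UNIV. ?xc $ b * ?xc $ b) = 1"
    using arg_cong[OF x_unit_sum, of complex_of_real] by simp
  have apply_A: "(\<chi> i. \<Sum>j\<in>UNIV. complex_of_real (?A $ i $ j) * w $ j)
      = (\<chi> i. complex_of_real D * (\<Sum>j\<in>UNIV. ?xc $ j * w $ j) * ?xc $ i)" for w :: "complex ^'n"
    by (simp add: vec_eq_iff sum_distrib_left mult_ac)
  have "is_eigenvalue ?A (complex_of_real D)"
    unfolding is_eigenvalue_def
  proof (intro exI conjI)
    show "?xc \<noteq> 0"
    proof
      assume "?xc = 0"
      with xc_unit show False by simp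
    qed
    show "(\<chi> i. \<Sum>j\<in>UNIV. complex_of_real (?A $ i $ j) * ?xc $ j) = (\<chi> i. complex_of_real D * ?xc $ i)"
      unfolding apply_A xc_unit by simp
  qed
  moreover have "cmod \<mu> \<le> cmod (complex_of_real D)" if eig: "is_eigenvalue ?A \<mu>" for \<mu>
  proof -
    obtain w :: "complex ^'n" where "w \<noteq> 0"
      and Aw: "(\<chi> i. \<Sum>j\<in>UNIV. complex_of_real (?A $ i $ j) * w $ j) = (\<chi> i. \<mu> * w $ i)"
      using eig unfolding is_eigenvalue_def by blast
    define s where "s = (\<Sum>j\<in>UNIV. ?xc $ j * w $ j)"
    have eigen_eq: "\<mu> * w $ i = complex_of_real D * s * ?xc $ i" for i
      using arg_cong[OF Aw, of "\<lambda>y. y $ i"] unfolding apply_A s_def by simp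
    have "\<mu> * s = (\<Sum>i\<in>UNIV. ?xc $ i * (\<mu> * w $ i))"
      by (simp add: s_def sum_distrib_left mult_ac)
    also have "\<dots> = (\<Sum>i\<in>UNIV. ?xc $ i * (complex_of_real D * s * ?xc $ i))"
      by (simp only: eigen_eq)
    also have "\<dots> = complex_of_real D * s * (\<Sum>i\<in>UNIV. ?xc $ i * ?xc $ i)"
      by (simp add: sum_distrib_left mult_ac)
    finally have "\<mu> * s = complex_of_real D * s"
      using xc_unit by simp
    moreover have "\<mu> = 0" if "s = 0"
    proof -
      obtain i where "w $ i \<noteq> 0"
        using \<open>w \<noteq> 0\<close> by (auto simp: vec_eq_iff)
      with eigen_eq[of i] \<open>s = 0\<close> show "\<mu> = 0" by simp
    qed
    ultimately have "\<mu> = 0 \<or> \<mu> = complex_of_real D"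
      by auto
    then show ?thesis
      by auto
  qed
  ultimately show ?thesis
    unfolding is_top_eigenvalue_def by blast
qed

lemma net_outer_weights:
  fixes \<phi> :: "real \<Rightarrow> real" and x :: "real ^'k0" and u v :: "real ^'k"
  shows "net \<phi> (\<chi> a j. x $ a * u $ j) (\<chi> j a. v $ j * x $ a)
       = (\<lambda>z. (\<Sum>j\<in>UNIV. u $ j * \<phi> (v $ j * (x \<bullet> z))) *\<^sub>R x)"
proof
  fix z
  have "(\<chi> j a. v $ j * x $ a) *v z = (\<chi> j. v $ j * (x \<bullet> z))"
    by (simp add: matrix_vector_mult_def vec_eq_iff inner_vec_def sum_distrib_left mult_ac)
  then show "net \<phi> (\<chi> a j. x $ a * u $ j) (\<chi> j a. v $ j * x $ a) z
      = (\<Sum>j\<in>UNIV. u $ j * \<phi> (v $ j * (x \<bullet> z))) *\<^sub>R x"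
    by (simp add: net_def matrix_vector_mult_def vec_eq_iff sum_distrib_left mult_ac)
qed

lemma has_derivative_net_outer_weights:
  fixes \<phi> :: "real \<Rightarrow> real" and x y :: "real ^'k0" and u v :: "real ^'k"
  assumes "\<And>j. \<phi> differentiable (at (v $ j * (x \<bullet> y)))"
  shows "(net \<phi> (\<chi> a j. x $ a * u $ j) (\<chi> j a. v $ j * x $ a) has_derivative
          (\<lambda>h. ((\<Sum>j\<in>UNIV. u $ j * v $ j * deriv \<phi> (v $ j * (x \<bullet> y))) * (x \<bullet> h)) *\<^sub>R x)) (at y)"
proof -
  have "((\<lambda>z. \<phi> (v $ j * (x \<bullet> z))) has_derivative
          (\<lambda>h. deriv \<phi> (v $ j * (x \<bullet> y)) * (v $ j * (x \<bullet> h)))) (at y)" for j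
  proof -
    have "(\<phi> has_real_derivative deriv \<phi> (v $ j * (x \<bullet> y))) (at (v $ j * (x \<bullet> y)))"
      using assms DERIV_deriv_iff_real_differentiable by blast
    moreover have "((\<lambda>z. v $ j * (x \<bullet> z)) has_derivative (\<lambda>h. v $ j * (x \<bullet> h))) (at y)"
      by (intro derivative_eq_intros) auto
    ultimately show ?thesis
      using DERIV_compose_FDERIV by (fastforce simp: mult.commute)
  qed
  then have "((\<lambda>z. \<Sum>j\<in>UNIV. u $ j * \<phi> (v $ j * (x \<bullet> z))) has_derivative
          (\<lambda>h. \<Sum>j\<in>UNIV. u $ j * (deriv \<phi> (v $ j * (x \<bullet> y)) * (v $ j * (x \<bullet> h))))) (at y)"
    by (intro has_derivative_sum has_derivative_mult_right)
  then have "((\<lambda>z. \<Sum>j\<in>UNIV. u $ j * \<phi> (v $ j * (x \<bullet> z))) has_derivative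
          (\<lambda>h. (\<Sum>j\<in>UNIV. u $ j * v $ j * deriv \<phi> (v $ j * (x \<bullet> y))) * (x \<bullet> h))) (at y)"
    by (rule has_derivative_eq_rhs) (simp add: fun_eq_iff sum_distrib_left mult_ac)
  then show ?thesis
    unfolding net_outer_weights by (rule has_derivative_scaleR_left)
qed

lemma jacobian_net_outer_weights:
  fixes \<phi> :: "real \<Rightarrow> real" and x :: "real ^'k0" and u v :: "real ^'k"
  assumes "\<And>j. \<phi> differentiable (at (v $ j))" and "norm x = 1"
  shows "jacobian (net \<phi> (\<chi> a j. x $ a * u $ j) (\<chi> j a. v $ j * x $ a)) (at x)
       = (\<chi> a b. (\<Sum>j\<in>UNIV. u $ j * v $ j * deriv \<phi> (v $ j)) * x $ a * x $ b)"
proof -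
  define D where "D = (\<Sum>j\<in>UNIV. u $ j * v $ j * deriv \<phi> (v $ j))"
  have "x \<bullet> x = 1"
    using assms(2) by (simp add: norm_eq_sqrt_inner)
  then have "(net \<phi> (\<chi> a j. x $ a * u $ j) (\<chi> j a. v $ j * x $ a) has_derivative
      (\<lambda>h. (D * (x \<bullet> h)) *\<^sub>R x)) (at x)"
    using has_derivative_net_outer_weights[of \<phi> v x x u] assms(1) unfolding D_def by simp
  moreover have "(\<lambda>h. (D * (x \<bullet> h)) *\<^sub>R x) = (\<lambda>h. (\<chi> a b. D * x $ a * x $ b) *v h)"
    by (simp add: fun_eq_iff vec_eq_iff matrix_vector_mult_def inner_vec_def sum_distrib_left mult_ac)
  ultimately have "frechet_derivative (net \<phi> (\<chi> a j. x $ a * u $ j) (\<chi> j a. v $ j * x $ a)) (at x)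
      = (\<lambda>h. (\<chi> a b. D * x $ a * x $ b) *v h)"
    using frechet_derivative_at by metis
  then show ?thesis
    unfolding jacobian_def D_def by simp
qed

theorem theorem2:
  fixes \<phi> :: "real \<Rightarrow> real"
    and x :: "real ^'k0"
    and u v u0 v0 :: "real ^'k"
  assumes phi_diff: "\<And>z. \<phi> differentiable (at z)"
    and ratio_finite: "\<And>z. deriv \<phi> z \<noteq> 0"
    and x_unit: "norm x = 1"
    and u0_const: "\<And>i j. u0 $ i = u0 $ j"
    and v0_const: "\<And>i j. v0 $ i = v0 $ j"
    and u_const: "\<And>i j. u $ i = u $ j"
    and v_const: "\<And>i j. v $ i = v $ j"
    and balance: "\<And>i. u $ i * \<phi> (v $ i) = 1 / real CARD('k)"
    and conserved: "\<And>i. (u $ i ^ 2 - u0 $ i ^ 2) / 2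
                          = (LBINT z = ereal (v0 $ i) .. ereal (v $ i). \<phi> z / deriv \<phi> z)"
  shows "\<forall>i. is_top_eigenvalue
              (jacobian (net \<phi> (\<chi> a j. x $ a * u $ j) (\<chi> j a. v $ j * x $ a)) (at x))
              (complex_of_real (deriv \<phi> (v $ i) * v $ i / \<phi> (v $ i)))"
proof
  \<comment> \<open>The initialization, the conservation law and \<open>\<phi>' \<noteq> 0\<close> only single out which \<open>(u, v)\<close>
    training reaches; the spectrum depends on \<open>(u, v)\<close> through the balance equation alone.\<close>
  fix i
  have "\<phi> (v $ i) \<noteq> 0"
    using balance[of i] by auto
  have "(\<Sum>j\<in>UNIV. u $ j * v $ j * deriv \<phi> (v $ j))
      = (\<Sum>j\<in>(UNIV :: 'k set). u $ i * v $ i * deriv \<phi> (v $ i))"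
    by (intro sum.cong refl) (metis u_const v_const)
  also have "\<dots> = real CARD('k) * (u $ i * v $ i * deriv \<phi> (v $ i))"
    by simp
  also have "\<dots> = deriv \<phi> (v $ i) * v $ i / \<phi> (v $ i)"
    using balance[of i] \<open>\<phi> (v $ i) \<noteq> 0\<close> by (simp add: field_simps)
  finally have eigenvalue: "(\<Sum>j\<in>UNIV. u $ j * v $ j * deriv \<phi> (v $ j))
      = deriv \<phi> (v $ i) * v $ i / \<phi> (v $ i)" .
  show "is_top_eigenvalue
          (jacobian (net \<phi> (\<chi> a j. x $ a * u $ j) (\<chi> j a. v $ j * x $ a)) (at x))
          (complex_of_real (deriv \<phi> (v $ i) * v $ i / \<phi> (v $ i)))"
    unfolding jacobian_net_outer_weights[OF phi_diff x_unit] eigenvalue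
    by (rule is_top_eigenvalue_scaled_outer_unit[OF x_unit])
qed

end
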